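(* Let $\Omega=\{x\in\mathbb{R}^n: a_i^Tx\le b_i,\ i=1,\ldots,m\}$ be a polyhedral convex set with nonempty interior, and let $f:\mathbb{R}^n\to\mathbb{R}$ be continuously differentiable with $L$-Lipschitz continuous gradient ($L>0$) and bounded below on $\Omega$ by $f_{\mathrm{low}}$. Consider the direct-search algorithm described below and suppose that at every iteration $k$ the polling set $\mathcal{D}_k$ is a $\Lambda$-positive spanning set for $B(x_k,\alpha_k)\cap\Omega$ and satisfies $\|d\|\le d_{\max}\alpha_k$ for all $d\in\mathcal{D}_k$, where $\Lambda>0$, $d_{\max}>0$. If at iteration $k$ we have $\pi(x_k)\neq0$ and $\alpha_k<\min\left(\frac{2\pi(x_k)}{(Ld_{\max}^2+\sigma)\Lambda},1\right)$, then iteration $k$ is successful.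
   Context: $\|\cdot\|$ is the Euclidean norm, $B(y,r)=\{z:\|z-y\|\le r\}$. Criticality measure: for $x\in\Omega$, $\pi(x):=\left|\min_{v:\ x+v\in\Omega,\ \|v\|\le1}\nabla f(x)^Tv\right|$. Given $x\in\Omega$, $\alpha>0$, $\Lambda\ge0$, a set $\{d_1,\ldots,d_p\}\subset\mathbb{R}^n$ is a $\Lambda$-positive spanning set for $B(x,\alpha)\cap\Omega$ if $x+d_i\in\Omega$ for all $i$ and, for every $v\in\mathbb{R}^n$ with $x+v\in\Omega$ and $\|v\|\le\alpha$, there exists $c\in\mathbb{R}^p$ with $c\ge0$, $v=\sum_ic_id_i$ and $\|c\|_1\le\Lambda$. The algorithm: inputs $x_0\in\Omega$, $\alpha_{\max}>0$, $\alpha_0\in(0,\alpha_{\max}]$, $\sigma>0$, $0<\gamma_{\mathrm{dec}}<1<\gamma_{\mathrm{inc}}$. For $k=0,1,2,\ldots$: compute a finite polling set $\mathcal{D}_k\subset\mathbb{R}^n$; if there exists $d_k\in\mathcal{D}_k$ with $x_k+d_k\in\Omega$ and $f(x_k+d_k)<f(x_k)-\frac{\sigma}{2}\alpha_k^2$, set $x_{k+1}=x_k+d_k$, $\alpha_{k+1}=\min\{\gamma_{\mathrm{inc}}\alpha_k,\alpha_{\max}\}$ (successful iteration); otherwise set $x_{k+1}=x_k$, $\alpha_{k+1}=\gamma_{\mathrm{dec}}\alpha_k$ (unsuccessful iteration). *)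

theory Defs
  imports "HOL-Analysis.Analysis"
begin

text \<open>The set over which the minimum is taken is compact and nonempty when x in Omega,
  so the minimum equals the infimum.\<close>
definition crit_measure :: "('a::euclidean_space \<Rightarrow> 'a) \<Rightarrow> 'a set \<Rightarrow> 'a \<Rightarrow> real" where
  "crit_measure g \<Omega> x = \<bar>Inf {g x \<bullet> v | v. x + v \<in> \<Omega> \<and> norm v \<le> 1}\<bar>"

definition lambda_pss :: "real \<Rightarrow> 'a::euclidean_space set \<Rightarrow> 'a \<Rightarrow> real \<Rightarrow> 'a set \<Rightarrow> bool" where
  "lambda_pss \<Lambda> \<Omega> x \<alpha> D \<longleftrightarrow>
     finite D \<and> (\<forall>d\<in>D. x + d \<in> \<Omega>) \<and>
     (\<forall>v. x + v \<in> \<Omega> \<and> norm v \<le> \<alpha> \<longrightarrow>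
        (\<exists>c::'a \<Rightarrow> real. (\<forall>d\<in>D. c d \<ge> 0) \<and> v = (\<Sum>d\<in>D. c d *\<^sub>R d) \<and> (\<Sum>d\<in>D. c d) \<le> \<Lambda>))"

definition succ_cond :: "('a::real_normed_vector \<Rightarrow> real) \<Rightarrow> 'a set \<Rightarrow> real \<Rightarrow> 'a \<Rightarrow> real \<Rightarrow> 'a set \<Rightarrow> bool" where
  "succ_cond f \<Omega> \<sigma> x \<alpha> D \<longleftrightarrow> (\<exists>d\<in>D. x + d \<in> \<Omega> \<and> f (x + d) < f x - \<sigma> / 2 * \<alpha>\<^sup>2)"

definition ds_run :: "('a::real_normed_vector \<Rightarrow> real) \<Rightarrow> 'a set \<Rightarrow> real \<Rightarrow> real \<Rightarrow> real \<Rightarrow> real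
     \<Rightarrow> (nat \<Rightarrow> 'a) \<Rightarrow> (nat \<Rightarrow> real) \<Rightarrow> (nat \<Rightarrow> 'a set) \<Rightarrow> bool" where
  "ds_run f \<Omega> \<alpha>max \<sigma> \<gamma>dec \<gamma>inc x \<alpha> D \<longleftrightarrow>
     x 0 \<in> \<Omega> \<and> \<alpha>max > 0 \<and> 0 < \<alpha> 0 \<and> \<alpha> 0 \<le> \<alpha>max \<and> \<sigma> > 0 \<and>
     0 < \<gamma>dec \<and> \<gamma>dec < 1 \<and> 1 < \<gamma>inc \<and>
     (\<forall>k. finite (D k) \<and>
        (if succ_cond f \<Omega> \<sigma> (x k) (\<alpha> k) (D k)
         then (\<exists>d\<in>D k. x k + d \<in> \<Omega> \<and> f (x k + d) < f (x k) - \<sigma> / 2 * (\<alpha> k)\<^sup>2 \<and>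
                 x (Suc k) = x k + d) \<and> \<alpha> (Suc k) = min (\<gamma>inc * \<alpha> k) \<alpha>max
         else x (Suc k) = x k \<and> \<alpha> (Suc k) = \<gamma>dec * \<alpha> k))"

end

theory Submission
  imports Defs
begin

text \<open>Let \<open>v\<close> attain the minimum defining \<open>\<pi>(x\<^sub>k)\<close>. By convexity \<open>\<alpha>\<^sub>k v\<close> is a feasible step of
  length at most \<open>\<alpha>\<^sub>k\<close>, so the positive spanning property writes it as a nonnegative combination
  of polling directions with total weight at most \<open>\<Lambda>\<close>; since \<open>\<nabla>f(x\<^sub>k)\<^sup>T(\<alpha>\<^sub>k v) = -\<alpha>\<^sub>k \<pi>(x\<^sub>k)\<close>,
  some polling direction \<open>d\<close> has \<open>\<nabla>f(x\<^sub>k)\<^sup>Td \<le> -\<alpha>\<^sub>k \<pi>(x\<^sub>k)/\<Lambda>\<close>. The descent lemma for an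
  \<open>L\<close>-Lipschitz gradient and \<open>\<parallel>d\<parallel> \<le> d\<^sub>m\<^sub>a\<^sub>x \<alpha>\<^sub>k\<close> then give
  \<open>f(x\<^sub>k + d) \<le> f(x\<^sub>k) - \<alpha>\<^sub>k \<pi>(x\<^sub>k)/\<Lambda> + L d\<^sub>m\<^sub>a\<^sub>x\<^sup>2 \<alpha>\<^sub>k\<^sup>2/2\<close>, which is below
  \<open>f(x\<^sub>k) - \<sigma> \<alpha>\<^sub>k\<^sup>2/2\<close> exactly when \<open>\<alpha>\<^sub>k < 2\<pi>(x\<^sub>k)/((L d\<^sub>m\<^sub>a\<^sub>x\<^sup>2 + \<sigma>)\<Lambda>)\<close>.\<close>

lemma lipschitz_gradient_upper_bound:
  fixes f :: "'a::real_inner \<Rightarrow> real" and g :: "'a \<Rightarrow> 'a"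
  assumes grad: "\<And>y. GDERIV f y :> g y"
    and Lip: "\<And>y z. norm (g y - g z) \<le> L * norm (y - z)"
  shows "f (y + d) \<le> f y + g y \<bullet> d + L / 2 * (norm d)\<^sup>2"
proof -
  define h where "h t = f (y + t *\<^sub>R d) - t * (g y \<bullet> d) - L / 2 * t\<^sup>2 * (norm d)\<^sup>2" for t
  have h_deriv: "(h has_real_derivative (g (y + t *\<^sub>R d) \<bullet> d - g y \<bullet> d - L * t * (norm d)\<^sup>2)) (at t)"
    for t
  proof -
    have line: "((\<lambda>t. y + t *\<^sub>R d) has_derivative (\<lambda>s. s *\<^sub>R d)) (at t)"
      by (auto intro!: derivative_eq_intros)
    have "(f has_derivative (\<lambda>h. h \<bullet> g (y + t *\<^sub>R d))) (at (y + t *\<^sub>R d))"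
      using grad[of "y + t *\<^sub>R d"] unfolding gderiv_def by simp
    from has_derivative_compose[OF line this]
    have "((\<lambda>t. f (y + t *\<^sub>R d)) has_derivative (\<lambda>s. (s *\<^sub>R d) \<bullet> g (y + t *\<^sub>R d))) (at t)"
      by (simp add: o_def)
    then have "((\<lambda>t. f (y + t *\<^sub>R d)) has_real_derivative (g (y + t *\<^sub>R d) \<bullet> d)) (at t)"
      by (simp add: has_field_derivative_def inner_commute mult_commute_abs)
    then show ?thesis unfolding h_def
      by (auto intro!: derivative_eq_intros simp: power2_eq_square algebra_simps)
  qed
  have "h 1 \<le> h 0"
  proof (rule DERIV_nonpos_imp_nonincreasing[of 0 1 h])
    fix t :: real assume t: "0 \<le> t" "t \<le> 1"
    have "g (y + t *\<^sub>R d) \<bullet> d - g y \<bullet> d = (g (y + t *\<^sub>R d) - g y) \<bullet> d"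
      by (simp add: inner_diff_left)
    also have "\<dots> \<le> norm (g (y + t *\<^sub>R d) - g y) * norm d" by (rule norm_cauchy_schwarz)
    also have "\<dots> \<le> L * norm (t *\<^sub>R d) * norm d"
      using Lip[of "y + t *\<^sub>R d" y] by (intro mult_right_mono) auto
    also have "\<dots> = L * t * (norm d)\<^sup>2" using t by (simp add: power2_eq_square)
    finally show "\<exists>D. DERIV h t :> D \<and> D \<le> 0" using h_deriv[of t] by auto
  qed simp
  then show ?thesis unfolding h_def by simp
qed

lemma closed_polyhedron: "closed {y. \<forall>i<m. A i \<bullet> y \<le> (b i :: real)}"
  by (intro closed_Collect_all closed_Collect_imp closed_Collect_le continuous_intros) auto

lemma convex_polyhedron: "convex {y. \<forall>i<m. A i \<bullet> y \<le> (b i :: real)}"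
proof -
  have "{y. \<forall>i<m. A i \<bullet> y \<le> b i} = (\<Inter>i<m. {y. A i \<bullet> y \<le> b i})" by auto
  then show ?thesis by (simp add: convex_INT convex_halfspace_le)
qed

lemma ds_run_iterates:
  assumes run: "ds_run f \<Omega> \<alpha>max \<sigma> \<gamma>dec \<gamma>inc x \<alpha> D"
  shows "x j \<in> \<Omega> \<and> \<alpha> j > 0"
proof (induction j)
  case 0
  then show ?case using run by (simp add: ds_run_def)
next
  case (Suc j)
  have params: "\<alpha>max > 0" "\<gamma>dec > 0" "\<gamma>inc > 1" using run by (simp_all add: ds_run_def)
  show ?case
  proof (cases "succ_cond f \<Omega> \<sigma> (x j) (\<alpha> j) (D j)")
    case True
    then have "\<exists>d\<in>D j. x j + d \<in> \<Omega> \<and> x (Suc j) = x j + d"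
      and "\<alpha> (Suc j) = min (\<gamma>inc * \<alpha> j) \<alpha>max"
      using run unfolding ds_run_def by (metis (lifting))+
    then show ?thesis using Suc params by auto
  next
    case False
    then have "x (Suc j) = x j" and "\<alpha> (Suc j) = \<gamma>dec * \<alpha> j"
      using run unfolding ds_run_def by (metis (lifting))+
    then show ?thesis using Suc params by simp
  qed
qed

lemma crit_measure_attained:
  fixes g :: "'a::euclidean_space \<Rightarrow> 'a"
  assumes "closed \<Omega>" "y \<in> \<Omega>"
  obtains v where "y + v \<in> \<Omega>" "norm v \<le> 1" "g y \<bullet> v = - crit_measure g \<Omega> y"
proof -
  define K where "K = {v. y + v \<in> \<Omega> \<and> norm v \<le> 1}"
  have "K = cball 0 1 \<inter> (\<lambda>v. y + v) -` \<Omega>" unfolding K_def by auto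
  then have "compact K"
    using assms(1) by (auto intro!: compact_Int_closed continuous_closed_vimage continuous_intros)
  moreover have "0 \<in> K" using assms(2) unfolding K_def by auto
  moreover have "continuous_on K (\<lambda>v. g y \<bullet> v)" by (intro continuous_intros)
  ultimately obtain v where v: "v \<in> K" and v_min: "\<And>u. u \<in> K \<Longrightarrow> g y \<bullet> v \<le> g y \<bullet> u"
    using continuous_attains_inf[of K "\<lambda>v. g y \<bullet> v"] by blast
  have "Inf {g y \<bullet> u | u. y + u \<in> \<Omega> \<and> norm u \<le> 1} = g y \<bullet> v"
    by (rule cInf_eq_minimum) (use v v_min in \<open>auto simp: K_def\<close>)
  moreover have "g y \<bullet> v \<le> 0" using v_min[OF \<open>0 \<in> K\<close>] by simp
  ultimately have "g y \<bullet> v = - crit_measure g \<Omega> y" unfolding crit_measure_def by simp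
  with v show thesis using that unfolding K_def by blast
qed

lemma nonneg_combination_descent_direction:
  fixes u :: "'a::real_inner"
  assumes "finite D" "\<And>d. d \<in> D \<Longrightarrow> c d \<ge> 0" "(\<Sum>d\<in>D. c d) \<le> \<Lambda>"
    and "u \<bullet> (\<Sum>d\<in>D. c d *\<^sub>R d) \<le> - \<epsilon>" "\<epsilon> > 0"
  shows "\<exists>d\<in>D. u \<bullet> d \<le> - \<epsilon> / \<Lambda>"
proof -
  have "D \<noteq> {}" using assms(4,5) by auto
  then obtain d where d: "d \<in> D" and d_min: "\<And>d'. d' \<in> D \<Longrightarrow> u \<bullet> d \<le> u \<bullet> d'"
    using arg_min_if_finite(1) arg_min_least \<open>finite D\<close> by metis
  have "(u \<bullet> d) * (\<Sum>d\<in>D. c d) = (\<Sum>d'\<in>D. c d' * (u \<bullet> d))" by (simp add: sum_distrib_right mult.commute)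
  also have "\<dots> \<le> (\<Sum>d'\<in>D. c d' * (u \<bullet> d'))" by (intro sum_mono mult_left_mono d_min assms(2))
  also have "\<dots> \<le> - \<epsilon>" using assms(4) by (simp add: inner_sum_right)
  finally have le: "(u \<bullet> d) * (\<Sum>d\<in>D. c d) \<le> - \<epsilon>" .
  have "(\<Sum>d\<in>D. c d) \<ge> 0" by (simp add: assms(2) sum_nonneg)
  moreover have "(\<Sum>d\<in>D. c d) \<noteq> 0" using le assms(5) by auto
  ultimately have sum_pos: "(\<Sum>d\<in>D. c d) > 0" by simp
  then have "\<Lambda> > 0" using assms(3) by simp
  have "(u \<bullet> d) * (\<Sum>d\<in>D. c d) < 0" using le assms(5) by simp
  then have "u \<bullet> d \<le> 0" using sum_pos by (simp add: mult_less_0_iff)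
  then have "(u \<bullet> d) * \<Lambda> \<le> - \<epsilon>" using mult_left_mono_neg[OF assms(3)] le by fastforce
  then have "u \<bullet> d \<le> - \<epsilon> / \<Lambda>" using \<open>\<Lambda> > 0\<close> by (simp add: field_simps)
  with d show ?thesis ..
qed

lemma lambda_pss_descent_direction:
  fixes g :: "'a::euclidean_space \<Rightarrow> 'a"
  assumes pss: "lambda_pss \<Lambda> \<Omega> y \<alpha> D"
    and "convex \<Omega>" "closed \<Omega>" "y \<in> \<Omega>" "0 < \<alpha>" "\<alpha> \<le> 1"
    and "crit_measure g \<Omega> y \<noteq> 0"
  shows "\<exists>d\<in>D. g y \<bullet> d \<le> - \<alpha> * crit_measure g \<Omega> y / \<Lambda>"
proof -
  obtain v where v: "y + v \<in> \<Omega>" "norm v \<le> 1" "g y \<bullet> v = - crit_measure g \<Omega> y"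
    using crit_measure_attained assms(3,4) by blast
  have "y + \<alpha> *\<^sub>R v = (1 - \<alpha>) *\<^sub>R y + \<alpha> *\<^sub>R (y + v)" by (simp add: algebra_simps)
  then have "y + \<alpha> *\<^sub>R v \<in> \<Omega>" using convexD[OF \<open>convex \<Omega>\<close> \<open>y \<in> \<Omega>\<close> v(1)] assms(5,6) by simp
  moreover have "norm (\<alpha> *\<^sub>R v) \<le> \<alpha>" using v(2) assms(5) by (simp add: mult_left_le)
  ultimately obtain c where c: "\<And>d. d \<in> D \<Longrightarrow> c d \<ge> 0" "\<alpha> *\<^sub>R v = (\<Sum>d\<in>D. c d *\<^sub>R d)"
      "(\<Sum>d\<in>D. c d) \<le> \<Lambda>" and "finite D"
    using pss unfolding lambda_pss_def by blast
  have "g y \<bullet> (\<Sum>d\<in>D. c d *\<^sub>R d) \<le> - (\<alpha> * crit_measure g \<Omega> y)"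
    using v(3) by (simp flip: c(2))
  moreover have "\<alpha> * crit_measure g \<Omega> y > 0"
    using assms(5,7) unfolding crit_measure_def by simp
  ultimately show ?thesis
    using nonneg_combination_descent_direction[OF \<open>finite D\<close> c(1,3)] by simp
qed

lemma small_step_sufficient_decrease:
  fixes a \<pi> \<Lambda> L dmax \<sigma> :: real
  assumes "0 < a" "0 < \<Lambda>" "0 < L * dmax\<^sup>2 + \<sigma>"
    and "a < 2 * \<pi> / ((L * dmax\<^sup>2 + \<sigma>) * \<Lambda>)"
  shows "- a * \<pi> / \<Lambda> + L / 2 * (dmax * a)\<^sup>2 < - \<sigma> / 2 * a\<^sup>2"
proof -
  have "a * (L * dmax\<^sup>2 + \<sigma>) * \<Lambda> < 2 * \<pi>"
    using assms by (simp add: pos_less_divide_eq mult.assoc)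
  then have "a * (a * (L * dmax\<^sup>2 + \<sigma>) * \<Lambda>) < a * (2 * \<pi>)"
    using assms(1) by simp
  then show ?thesis using assms(2) by (simp add: field_simps power2_eq_square)
qed

theorem lemma4p6:
  fixes f :: "'a::euclidean_space \<Rightarrow> real" and g :: "'a \<Rightarrow> 'a"
    and A :: "nat \<Rightarrow> 'a" and b :: "nat \<Rightarrow> real" and m :: nat and \<Omega> :: "'a set"
    and x :: "nat \<Rightarrow> 'a" and \<alpha> :: "nat \<Rightarrow> real" and D :: "nat \<Rightarrow> 'a set"
    and L flow \<Lambda> dmax \<alpha>max \<sigma> \<gamma>dec \<gamma>inc :: real and k :: nat
  assumes Omega: "\<Omega> = {y. \<forall>i<m. A i \<bullet> y \<le> b i}"
    and interior: "interior \<Omega> \<noteq> {}"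
    and grad: "\<And>y. GDERIV f y :> g y"
    and grad_cont: "continuous_on UNIV g"
    and Lpos: "L > 0"
    and Lip: "\<And>y z. norm (g y - g z) \<le> L * norm (y - z)"
    and low: "\<And>y. y \<in> \<Omega> \<Longrightarrow> f y \<ge> flow"
    and run: "ds_run f \<Omega> \<alpha>max \<sigma> \<gamma>dec \<gamma>inc x \<alpha> D"
    and Lambda: "\<Lambda> > 0" and dmax: "dmax > 0"
    and poll: "\<And>j. lambda_pss \<Lambda> \<Omega> (x j) (\<alpha> j) (D j)"
    and bound: "\<And>j d. d \<in> D j \<Longrightarrow> norm d \<le> dmax * \<alpha> j"
    and crit: "crit_measure g \<Omega> (x k) \<noteq> 0"
    and small: "\<alpha> k < min (2 * crit_measure g \<Omega> (x k) / ((L * dmax\<^sup>2 + \<sigma>) * \<Lambda>)) 1"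
  shows "succ_cond f \<Omega> \<sigma> (x k) (\<alpha> k) (D k)"
proof -
  define \<pi> where "\<pi> = crit_measure g \<Omega> (x k)"
  have xk: "x k \<in> \<Omega>" and \<alpha>_pos: "\<alpha> k > 0" using ds_run_iterates[OF run] by auto
  have "\<sigma> > 0" using run by (simp add: ds_run_def)
  then have curvature_pos: "0 < L * dmax\<^sup>2 + \<sigma>" using Lpos dmax by (intro add_pos_pos) auto
  have "\<alpha> k \<le> 1" using small by simp
  from lambda_pss_descent_direction[OF poll[of k] convex_polyhedron[of m A b, folded Omega]
      closed_polyhedron[of m A b, folded Omega] xk \<alpha>_pos this crit]
  obtain d where d: "d \<in> D k" and descent: "g (x k) \<bullet> d \<le> - \<alpha> k * \<pi> / \<Lambda>"
    unfolding \<pi>_def by blast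
  have "(norm d)\<^sup>2 \<le> (dmax * \<alpha> k)\<^sup>2" using bound[OF d] by (intro power_mono) auto
  then have "L / 2 * (norm d)\<^sup>2 \<le> L / 2 * (dmax * \<alpha> k)\<^sup>2" using Lpos by simp
  then have "f (x k + d) \<le> f (x k) - \<alpha> k * \<pi> / \<Lambda> + L / 2 * (dmax * \<alpha> k)\<^sup>2"
    using lipschitz_gradient_upper_bound[OF grad Lip, of "x k" d] descent by linarith
  also have "\<dots> < f (x k) - \<sigma> / 2 * (\<alpha> k)\<^sup>2"
    using small_step_sufficient_decrease[OF \<alpha>_pos Lambda curvature_pos] small unfolding \<pi>_def by simp
  finally show ?thesis unfolding succ_cond_def using d poll[of k] unfolding lambda_pss_def by blast
qed

end
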